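(* Let $\mathbf A$ be a finite algebra belonging to a congruence modular variety with $\mathrm{typ}\{\mathbf A\}\subseteq\{\mathbf 4\}$, and let $\alpha$ be a join irreducible congruence of $\mathbf A$. Then (1) $a<\!>_\alpha b$ whenever $\{a,b\}$ is a $(\delta,\delta')$-minimal set for some covering pair $\delta\prec\delta'\le\alpha$ of congruences; (2) for every $a\in A$ the graph $(a/\alpha,<\!>_\alpha)$ is connected; (3) all unary polynomials of $\mathbf A$ preserve the relation $\le_\alpha$, and all polynomials of $\mathbf A$ preserve the transitive closure of $\le_\alpha$.
   Context: Tame congruence theory (Hobby–McKenzie): for congruences $\delta<\delta'$ of a finite algebra, $U_{\mathbf A}(\delta,\delta')$ is the set of all $f(A)$ with $f$ a unary polynomial and $f(\delta')\not\subseteq\delta$; its inclusion-minimal members are the $(\delta,\delta')$-minimal sets. $\mathrm{typ}\{\mathbf A\}$ is the set of types of all prime quotients; type $\mathbf 4$ is the lattice type. For a join irreducible congruence $\alpha$ let $\alpha^-$ be its unique lower cover; under the hypotheses an $(\alpha^-,\alpha)$-minimal set is a $2$-element set $\{0,1\}$ on which the induced algebra is polynomially equivalent to the $2$-element lattice; fix one and label it so that $0<1$ in that lattice order. Define $a\le_\alpha b$ iff there is a unary polynomial $f$ of $\mathbf A$ with $f(1)=b$ and $f(0)=a$. Write $a<\!>_\alpha b$ iff ($a\le_\alpha b$ or $b\le_\alpha a$) and $a\ne b$. "Belongs to a congruence modular variety" means the variety generated by $\mathbf A$ is congruence modular. *)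

theory Defs
  imports Main
begin

definition algebra :: "'a set \<Rightarrow> ('f \<Rightarrow> nat) \<Rightarrow> ('f \<Rightarrow> 'a list \<Rightarrow> 'a) \<Rightarrow> bool" where
  "algebra A ar op \<longleftrightarrow> A \<noteq> {} \<and>
     (\<forall>f xs. length xs = ar f \<and> set xs \<subseteq> A \<longrightarrow> op f xs \<in> A)"

definition tuples :: "'a set \<Rightarrow> nat \<Rightarrow> 'a list set" where
  "tuples A n = {xs. length xs = n \<and> set xs \<subseteq> A}"

inductive_set pol :: "'a set \<Rightarrow> ('f \<Rightarrow> nat) \<Rightarrow> ('f \<Rightarrow> 'a list \<Rightarrow> 'a) \<Rightarrow> nat \<Rightarrow> ('a list \<Rightarrow> 'a) set"
  for A ar op n where
  pol_proj: "i < n \<Longrightarrow> (\<lambda>xs. xs ! i) \<in> pol A ar op n"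
| pol_const: "c \<in> A \<Longrightarrow> (\<lambda>xs. c) \<in> pol A ar op n"
| pol_app: "length ps = ar f \<Longrightarrow> (\<forall>p\<in>set ps. p \<in> pol A ar op n)
     \<Longrightarrow> (\<lambda>xs. op f (map (\<lambda>p. p xs) ps)) \<in> pol A ar op n"

definition upol :: "'a set \<Rightarrow> ('f \<Rightarrow> nat) \<Rightarrow> ('f \<Rightarrow> 'a list \<Rightarrow> 'a) \<Rightarrow> ('a \<Rightarrow> 'a) set" where
  "upol A ar op = {(\<lambda>x. p [x]) | p. p \<in> pol A ar op 1}"

definition con :: "'a set \<Rightarrow> ('f \<Rightarrow> nat) \<Rightarrow> ('f \<Rightarrow> 'a list \<Rightarrow> 'a) \<Rightarrow> 'a rel \<Rightarrow> bool" where
  "con A ar op \<theta> \<longleftrightarrow> equiv A \<theta> \<and>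
     (\<forall>f xs ys. xs \<in> tuples A (ar f) \<and> ys \<in> tuples A (ar f) \<and>
        list_all2 (\<lambda>x y. (x, y) \<in> \<theta>) xs ys \<longrightarrow> (op f xs, op f ys) \<in> \<theta>)"

definition con_join :: "'a set \<Rightarrow> ('f \<Rightarrow> nat) \<Rightarrow> ('f \<Rightarrow> 'a list \<Rightarrow> 'a) \<Rightarrow> 'a rel \<Rightarrow> 'a rel \<Rightarrow> 'a rel" where
  "con_join A ar op \<beta> \<gamma> = \<Inter>{\<theta>. con A ar op \<theta> \<and> \<beta> \<union> \<gamma> \<subseteq> \<theta>}"

definition con_modular :: "'a set \<Rightarrow> ('f \<Rightarrow> nat) \<Rightarrow> ('f \<Rightarrow> 'a list \<Rightarrow> 'a) \<Rightarrow> bool" where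
  "con_modular A ar op \<longleftrightarrow>
     (\<forall>x y z. con A ar op x \<and> con A ar op y \<and> con A ar op z \<and> x \<subseteq> z \<longrightarrow>
        con_join A ar op x (y \<inter> z) = con_join A ar op x y \<inter> z)"

definition covers :: "'a set \<Rightarrow> ('f \<Rightarrow> nat) \<Rightarrow> ('f \<Rightarrow> 'a list \<Rightarrow> 'a) \<Rightarrow> 'a rel \<Rightarrow> 'a rel \<Rightarrow> bool" where
  "covers A ar op \<delta> \<delta>' \<longleftrightarrow> con A ar op \<delta> \<and> con A ar op \<delta>' \<and> \<delta> \<subset> \<delta>' \<and>
     \<not> (\<exists>\<theta>. con A ar op \<theta> \<and> \<delta> \<subset> \<theta> \<and> \<theta> \<subset> \<delta>')"

definition join_irreducible :: "'a set \<Rightarrow> ('f \<Rightarrow> nat) \<Rightarrow> ('f \<Rightarrow> 'a list \<Rightarrow> 'a) \<Rightarrow> 'a rel \<Rightarrow> bool" where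
  "join_irreducible A ar op \<alpha> \<longleftrightarrow> con A ar op \<alpha> \<and> \<alpha> \<noteq> Id_on A \<and>
     (\<forall>\<beta> \<gamma>. con A ar op \<beta> \<and> con A ar op \<gamma> \<and> \<alpha> = con_join A ar op \<beta> \<gamma> \<longrightarrow> \<alpha> = \<beta> \<or> \<alpha> = \<gamma>)"

text \<open>Variety generated by A is congruence modular: every subalgebra of every power
A^I (index set I of naturals, power realised as extensional functions) has a modular
congruence lattice.\<close>

definition pow_carrier :: "'a set \<Rightarrow> nat set \<Rightarrow> (nat \<Rightarrow> 'a) set" where
  "pow_carrier A I = {x. (\<forall>i\<in>I. x i \<in> A) \<and> (\<forall>i. i \<notin> I \<longrightarrow> x i = undefined)}"

definition pow_op :: "('f \<Rightarrow> 'a list \<Rightarrow> 'a) \<Rightarrow> nat set \<Rightarrow> 'f \<Rightarrow> (nat \<Rightarrow> 'a) list \<Rightarrow> (nat \<Rightarrow> 'a)" where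
  "pow_op op I f xs = (\<lambda>i. if i \<in> I then op f (map (\<lambda>x. x i) xs) else undefined)"

definition subuniverse :: "'b set \<Rightarrow> ('f \<Rightarrow> nat) \<Rightarrow> ('f \<Rightarrow> 'b list \<Rightarrow> 'b) \<Rightarrow> 'b set \<Rightarrow> bool" where
  "subuniverse B ar op S \<longleftrightarrow> S \<subseteq> B \<and>
     (\<forall>f xs. xs \<in> tuples S (ar f) \<longrightarrow> op f xs \<in> S)"

definition cm_variety :: "'a set \<Rightarrow> ('f \<Rightarrow> nat) \<Rightarrow> ('f \<Rightarrow> 'a list \<Rightarrow> 'a) \<Rightarrow> bool" where
  "cm_variety A ar op \<longleftrightarrow>
     (\<forall>I S. subuniverse (pow_carrier A I) ar (pow_op op I) S \<longrightarrow> con_modular S ar (pow_op op I))"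

definition U_sets :: "'a set \<Rightarrow> ('f \<Rightarrow> nat) \<Rightarrow> ('f \<Rightarrow> 'a list \<Rightarrow> 'a) \<Rightarrow> 'a rel \<Rightarrow> 'a rel \<Rightarrow> 'a set set" where
  "U_sets A ar op \<delta> \<delta>' = {f ` A | f. f \<in> upol A ar op \<and> \<not> ((\<lambda>(x, y). (f x, f y)) ` \<delta>' \<subseteq> \<delta>)}"

definition minimal_set :: "'a set \<Rightarrow> ('f \<Rightarrow> nat) \<Rightarrow> ('f \<Rightarrow> 'a list \<Rightarrow> 'a) \<Rightarrow> 'a rel \<Rightarrow> 'a rel \<Rightarrow> 'a set \<Rightarrow> bool" where
  "minimal_set A ar op \<delta> \<delta>' U \<longleftrightarrow> U \<in> U_sets A ar op \<delta> \<delta>' \<and>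
     (\<forall>V \<in> U_sets A ar op \<delta> \<delta>'. V \<subseteq> U \<longrightarrow> V = U)"

definition trace :: "'a set \<Rightarrow> ('f \<Rightarrow> nat) \<Rightarrow> ('f \<Rightarrow> 'a list \<Rightarrow> 'a) \<Rightarrow> 'a rel \<Rightarrow> 'a rel \<Rightarrow> 'a set \<Rightarrow> 'a set \<Rightarrow> bool" where
  "trace A ar op \<delta> \<delta>' U N \<longleftrightarrow> (\<exists>b\<in>U. N = U \<inter> \<delta>' `` {b} \<and> \<not> (N \<times> N \<subseteq> \<delta>))"

inductive_set lat_pol :: "nat \<Rightarrow> (bool list \<Rightarrow> bool) set" for n where
  lat_proj: "i < n \<Longrightarrow> (\<lambda>xs. xs ! i) \<in> lat_pol n"
| lat_const: "(\<lambda>xs. c) \<in> lat_pol n"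
| lat_meet: "p \<in> lat_pol n \<Longrightarrow> q \<in> lat_pol n \<Longrightarrow> (\<lambda>xs. p xs \<and> q xs) \<in> lat_pol n"
| lat_join: "p \<in> lat_pol n \<Longrightarrow> q \<in> lat_pol n \<Longrightarrow> (\<lambda>xs. p xs \<or> q xs) \<in> lat_pol n"

text \<open>The algebra (A|N)/(\<delta>|N) is polynomially equivalent to the 2-element lattice:
there is a bijection h of N/\<delta> onto the lattice carrier such that the polynomial operations
of A|N (the restrictions to N of polynomials of A preserving N) induce on N/\<delta> exactly the
lattice polynomial operations.\<close>
definition induced_lattice :: "'a set \<Rightarrow> ('f \<Rightarrow> nat) \<Rightarrow> ('f \<Rightarrow> 'a list \<Rightarrow> 'a) \<Rightarrow> 'a rel \<Rightarrow> 'a set \<Rightarrow> bool" where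
  "induced_lattice A ar op \<delta> N \<longleftrightarrow> (\<exists>h :: 'a \<Rightarrow> bool.
     (\<forall>x\<in>N. \<forall>y\<in>N. (x, y) \<in> \<delta> \<longleftrightarrow> h x = h y) \<and> h ` N = UNIV \<and>
     (\<forall>n. (\<forall>p \<in> pol A ar op n. (\<forall>xs\<in>tuples N n. p xs \<in> N) \<longrightarrow>
             (\<exists>g \<in> lat_pol n. \<forall>xs\<in>tuples N n. h (p xs) = g (map h xs))) \<and>
          (\<forall>g \<in> lat_pol n. \<exists>p \<in> pol A ar op n. (\<forall>xs\<in>tuples N n. p xs \<in> N) \<and>
             (\<forall>xs\<in>tuples N n. h (p xs) = g (map h xs)))))"

definition type4 :: "'a set \<Rightarrow> ('f \<Rightarrow> nat) \<Rightarrow> ('f \<Rightarrow> 'a list \<Rightarrow> 'a) \<Rightarrow> 'a rel \<Rightarrow> 'a rel \<Rightarrow> bool" where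
  "type4 A ar op \<delta> \<delta>' \<longleftrightarrow> (\<exists>U N. minimal_set A ar op \<delta> \<delta>' U \<and> trace A ar op \<delta> \<delta>' U N \<and>
     induced_lattice A ar op \<delta> N)"

definition typ_sub4 :: "'a set \<Rightarrow> ('f \<Rightarrow> nat) \<Rightarrow> ('f \<Rightarrow> 'a list \<Rightarrow> 'a) \<Rightarrow> bool" where
  "typ_sub4 A ar op \<longleftrightarrow> (\<forall>\<delta> \<delta>'. covers A ar op \<delta> \<delta>' \<longrightarrow> type4 A ar op \<delta> \<delta>')"

text \<open>a \<le>_\<alpha> b with respect to the fixed labelled minimal set {z,u} (z = 0, u = 1).\<close>
definition leq_al :: "'a set \<Rightarrow> ('f \<Rightarrow> nat) \<Rightarrow> ('f \<Rightarrow> 'a list \<Rightarrow> 'a) \<Rightarrow> 'a \<Rightarrow> 'a \<Rightarrow> 'a \<Rightarrow> 'a \<Rightarrow> bool" where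
  "leq_al A ar op z u a b \<longleftrightarrow> (\<exists>f \<in> upol A ar op. f u = b \<and> f z = a)"

definition comp_al :: "'a set \<Rightarrow> ('f \<Rightarrow> nat) \<Rightarrow> ('f \<Rightarrow> 'a list \<Rightarrow> 'a) \<Rightarrow> 'a \<Rightarrow> 'a \<Rightarrow> 'a \<Rightarrow> 'a \<Rightarrow> bool" where
  "comp_al A ar op z u a b \<longleftrightarrow> (leq_al A ar op z u a b \<or> leq_al A ar op z u b a) \<and> a \<noteq> b"

end

theory Submission imports Defs begin

text \<open>The relation \<open>\<le>\<^sub>\<alpha>\<close> is reflexive on \<open>A\<close>, contains \<open>(0, 1)\<close>, lies inside \<open>\<alpha>\<close> and is
preserved by unary polynomials. Hence the equivalence relation it generates is preserved by unary
polynomials, i.e. it is a congruence; it lies between \<open>\<alpha>\<^sup>-\<close> and \<open>\<alpha>\<close> and is not below \<open>\<alpha>\<^sup>-\<close>, so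
join irreducibility of \<open>\<alpha>\<close> forces it to be \<open>\<alpha>\<close> itself. Every \<open>\<alpha>\<close>-class is therefore connected
by \<open>\<le>\<^sub>\<alpha>\<close>-steps. If \<open>{a, b} = h(A)\<close> is minimal for a cover below \<open>\<alpha>\<close>, then \<open>h\<close> separates the ends
of some \<open>\<alpha>\<close>-pair, hence of a single \<open>\<le>\<^sub>\<alpha>\<close>-step, and composing that step with \<open>h\<close> compares
\<open>a\<close> with \<open>b\<close>. Finally, a reflexive transitive relation preserved by unary polynomials is
preserved by all polynomials, since arguments may be changed one coordinate at a time.\<close>

subsection \<open>Polynomials\<close>

lemma pol_closed:
  assumes alg: "algebra A ar op"
  shows "p \<in> pol A ar op n \<Longrightarrow> xs \<in> tuples A n \<Longrightarrow> p xs \<in> A"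
proof (induction p rule: pol.induct)
  case (pol_proj i) then show ?case by (auto simp: tuples_def)
next
  case (pol_const c) then show ?case by simp
next
  case (pol_app ps f)
  then have "length (map (\<lambda>p. p xs) ps) = ar f" "set (map (\<lambda>p. p xs) ps) \<subseteq> A" by auto
  then show ?case using alg unfolding algebra_def by blast
qed

lemma upol_closed: "algebra A ar op \<Longrightarrow> h \<in> upol A ar op \<Longrightarrow> x \<in> A \<Longrightarrow> h x \<in> A"
  unfolding upol_def using pol_closed[of A ar op] by (auto simp: tuples_def)

lemma upol_const: "c \<in> A \<Longrightarrow> (\<lambda>x. c) \<in> upol A ar op"
  unfolding upol_def by (auto intro!: exI[of _ "\<lambda>xs. c"] pol_const)

lemma upol_id: "(\<lambda>x. x) \<in> upol A ar op"
  unfolding upol_def by (auto intro!: exI[of _ "\<lambda>xs. xs ! 0"] pol_proj)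

lemma upol_op:
  assumes "set hs \<subseteq> upol A ar op" "length hs = ar f"
  shows "(\<lambda>t. op f (map (\<lambda>h. h t) hs)) \<in> upol A ar op"
proof -
  define r where "r h = (SOME p. p \<in> pol A ar op 1 \<and> h = (\<lambda>x. p [x]))" for h
  have r: "r h \<in> pol A ar op 1 \<and> h = (\<lambda>x. r h [x])" if "h \<in> upol A ar op" for h
  proof -
    have "\<exists>p. p \<in> pol A ar op 1 \<and> h = (\<lambda>x. p [x])" using that unfolding upol_def by blast
    then show ?thesis unfolding r_def by (rule someI_ex)
  qed
  have pol: "(\<lambda>xs. op f (map (\<lambda>p. p xs) (map r hs))) \<in> pol A ar op 1"
    by (rule pol_app) (use assms r in auto)
  have "map (\<lambda>h. h t) hs = map (\<lambda>p. p [t]) (map r hs)" for t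
    using assms(1) r by (auto simp: map_eq_conv) (metis subsetD)
  then have "(\<lambda>t. op f (map (\<lambda>h. h t) hs)) = (\<lambda>x. (\<lambda>xs. op f (map (\<lambda>p. p xs) (map r hs))) [x])"
    by (simp del: map_map)
  then show ?thesis using pol unfolding upol_def
    by (intro CollectI exI[of _ "\<lambda>xs. op f (map (\<lambda>p. p xs) (map r hs))"]) simp
qed

lemma pol_subst_upol:
  assumes hs: "set hs \<subseteq> upol A ar op" "length hs = n"
  shows "p \<in> pol A ar op n \<Longrightarrow> (\<lambda>t. p (map (\<lambda>h. h t) hs)) \<in> upol A ar op"
proof (induction p rule: pol.induct)
  case (pol_proj i)
  then have "(\<lambda>t. map (\<lambda>h. h t) hs ! i) = hs ! i" using hs by auto
  then show ?case using pol_proj hs by auto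
next
  case (pol_const c) then show ?case by (simp add: upol_const)
next
  case (pol_app ps f)
  have "(\<lambda>t. op f (map (\<lambda>h. h t) (map (\<lambda>q t. q (map (\<lambda>h. h t) hs)) ps))) \<in> upol A ar op"
    by (rule upol_op) (use pol_app in auto)
  then show ?case by (simp add: o_def)
qed

lemma upol_comp: "f \<in> upol A ar op \<Longrightarrow> g \<in> upol A ar op \<Longrightarrow> (\<lambda>x. f (g x)) \<in> upol A ar op"
proof -
  assume f: "f \<in> upol A ar op" and g: "g \<in> upol A ar op"
  then obtain p where p: "p \<in> pol A ar op 1" "f = (\<lambda>x. p [x])" unfolding upol_def by blast
  have "(\<lambda>t. p (map (\<lambda>h. h t) [g])) \<in> upol A ar op"
    by (rule pol_subst_upol[OF _ _ p(1)]) (use g in auto)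
  then show ?thesis using p by simp
qed

lemma pol_translation_upol:
  assumes "p \<in> pol A ar op n" "set pre \<subseteq> A" "set post \<subseteq> A" "length pre + Suc (length post) = n"
  shows "(\<lambda>t. p (pre @ t # post)) \<in> upol A ar op"
proof -
  let ?hs = "map (\<lambda>c t. c) pre @ (\<lambda>t. t) # map (\<lambda>c t. c) post"
  have "(\<lambda>t. p (map (\<lambda>h. h t) ?hs)) \<in> upol A ar op"
    by (rule pol_subst_upol[OF _ _ assms(1)]) (use assms(2-4) upol_const[of _ A ar op] upol_id in auto)
  then show ?thesis by (simp add: o_def)
qed

lemma op_pol: "(\<lambda>xs. op f (map (\<lambda>i. xs ! i) [0..<ar f])) \<in> pol A ar op (ar f)"
proof -
  have "(\<lambda>xs. op f (map (\<lambda>p. p xs) (map (\<lambda>i xs. xs ! i) [0..<ar f]))) \<in> pol A ar op (ar f)"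
    by (rule pol_app) (auto intro: pol_proj)
  then show ?thesis by (simp add: o_def)
qed

subsection \<open>Relations compatible with polynomials\<close>

definition upol_compatible :: "'a set \<Rightarrow> ('f \<Rightarrow> nat) \<Rightarrow> ('f \<Rightarrow> 'a list \<Rightarrow> 'a) \<Rightarrow> 'a rel \<Rightarrow> bool" where
  "upol_compatible A ar op T \<longleftrightarrow> (\<forall>g\<in>upol A ar op. \<forall>(a, b)\<in>T. (g a, g b) \<in> T)"

lemma upol_compatibleD: "upol_compatible A ar op T \<Longrightarrow> g \<in> upol A ar op \<Longrightarrow> (a, b) \<in> T \<Longrightarrow> (g a, g b) \<in> T"
  unfolding upol_compatible_def by blast

lemma upol_compatible_Un_converse:
  "upol_compatible A ar op T \<Longrightarrow> upol_compatible A ar op (T \<union> T\<inverse>)"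
  unfolding upol_compatible_def by blast

lemma upol_compatible_trancl:
  assumes "upol_compatible A ar op T"
  shows "upol_compatible A ar op (T\<^sup>+)"
  unfolding upol_compatible_def
proof (intro ballI, clarify)
  fix g a b assume g: "g \<in> upol A ar op" and "(a, b) \<in> T\<^sup>+"
  from \<open>(a, b) \<in> T\<^sup>+\<close> show "(g a, g b) \<in> T\<^sup>+"
    by (induction rule: trancl_induct) (auto dest: upol_compatibleD[OF assms g] intro: trancl_into_trancl)
qed

lemma pol_con:
  assumes alg: "algebra A ar op" and con: "con A ar op \<theta>"
  shows "p \<in> pol A ar op n \<Longrightarrow> xs \<in> tuples A n \<Longrightarrow> ys \<in> tuples A n
     \<Longrightarrow> list_all2 (\<lambda>x y. (x, y) \<in> \<theta>) xs ys \<Longrightarrow> (p xs, p ys) \<in> \<theta>"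
proof (induction p rule: pol.induct)
  case (pol_proj i)
  then show ?case using list_all2_nthD[of "\<lambda>x y. (x, y) \<in> \<theta>"] by (auto simp: tuples_def)
next
  case (pol_const c) then show ?case using con by (auto simp: con_def equiv_def refl_on_def)
next
  case (pol_app ps f)
  have "map (\<lambda>p. p xs) ps \<in> tuples A (ar f)" "map (\<lambda>p. p ys) ps \<in> tuples A (ar f)"
    using pol_app pol_closed[OF alg] by (auto simp: tuples_def)
  moreover have "list_all2 (\<lambda>x y. (x, y) \<in> \<theta>) (map (\<lambda>p. p xs) ps) (map (\<lambda>p. p ys) ps)"
    using pol_app by (auto simp: list_all2_map1 list_all2_map2 intro!: list.rel_refl_strong)
  ultimately show ?case using con unfolding con_def by simp
qed

lemma con_upol_compatible:
  assumes "algebra A ar op" "con A ar op \<theta>"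
  shows "upol_compatible A ar op \<theta>"
  unfolding upol_compatible_def upol_def
proof clarify
  fix p a b assume "p \<in> pol A ar op 1" "(a, b) \<in> \<theta>"
  then show "(p [a], p [b]) \<in> \<theta>"
    using assms by (intro pol_con) (auto simp: tuples_def con_def equiv_def)
qed

lemma pol_compatible_if_upol_compatible:
  assumes alg: "algebra A ar op" and T: "T \<subseteq> A \<times> A" "trans T" "\<And>c. c \<in> A \<Longrightarrow> (c, c) \<in> T"
    and comp: "upol_compatible A ar op T" and p: "p \<in> pol A ar op n"
    and xys: "list_all2 (\<lambda>x y. (x, y) \<in> T) xs ys" "length xs = n"
  shows "(p xs, p ys) \<in> T"
proof -
  have "(p (pre @ xs), p (pre @ ys)) \<in> T"
    if "list_all2 (\<lambda>x y. (x, y) \<in> T) xs ys" "set pre \<subseteq> A" "length pre + length xs = n" for pre xs ys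
    using that
  proof (induction xs ys arbitrary: pre rule: list_all2_induct)
    case Nil
    then show ?case using T(3) pol_closed[OF alg p] by (simp add: tuples_def)
  next
    case (Cons x xs y ys)
    have A: "set xs \<subseteq> A" "y \<in> A"
      using Cons.hyps T(1) by (auto simp: list_all2_conv_all_nth set_conv_nth)
    have "(\<lambda>t. p (pre @ t # xs)) \<in> upol A ar op"
      by (rule pol_translation_upol[OF p]) (use Cons.prems A in auto)
    then have "(p (pre @ x # xs), p (pre @ y # xs)) \<in> T"
      using upol_compatibleD[OF comp] Cons.hyps(1) by blast
    moreover have "(p ((pre @ [y]) @ xs), p ((pre @ [y]) @ ys)) \<in> T"
      by (rule Cons.IH) (use Cons.prems A in auto)
    ultimately show ?case using T(2) by (auto elim: transE)
  qed
  from this[of xs ys "[]"] show ?thesis using xys by simp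
qed

lemma con_if_upol_compatible:
  assumes alg: "algebra A ar op" and eq: "equiv A \<theta>" and comp: "upol_compatible A ar op \<theta>"
  shows "con A ar op \<theta>"
  unfolding con_def
proof (intro conjI eq allI impI, elim conjE)
  fix f xs ys
  assume xs: "xs \<in> tuples A (ar f)" and ys: "ys \<in> tuples A (ar f)"
    and xys: "list_all2 (\<lambda>x y. (x, y) \<in> \<theta>) xs ys"
  have "(op f (map (\<lambda>i. xs ! i) [0..<ar f]), op f (map (\<lambda>i. ys ! i) [0..<ar f])) \<in> \<theta>"
    by (rule pol_compatible_if_upol_compatible[OF alg _ _ _ comp op_pol xys])
      (use eq xs in \<open>auto simp: tuples_def equiv_def refl_on_def\<close>)
  moreover have "length xs = ar f" "length ys = ar f" using xs ys by (auto simp: tuples_def)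
  ultimately show "(op f xs, op f ys) \<in> \<theta>" by (metis map_nth)
qed

lemma con_Inter:
  assumes "S \<noteq> {}" "\<And>\<theta>. \<theta> \<in> S \<Longrightarrow> con A ar op \<theta>"
  shows "con A ar op (\<Inter>S)"
proof -
  obtain t where t: "t \<in> S" using assms(1) by blast
  have "equiv A (\<Inter>S)"
  proof (rule equivI)
    show "\<Inter>S \<subseteq> A \<times> A" using t assms(2) unfolding con_def equiv_def by blast
    show "refl_on A (\<Inter>S)" using assms by (auto simp: con_def equiv_def refl_on_def)
    show "sym (\<Inter>S)" using assms(2) unfolding con_def equiv_def sym_def by blast
    show "trans (\<Inter>S)" using assms(2) unfolding con_def equiv_def trans_def by blast
  qed
  moreover have "(op f xs, op f ys) \<in> \<Inter>S"
    if "xs \<in> tuples A (ar f)" "ys \<in> tuples A (ar f)" "list_all2 (\<lambda>x y. (x, y) \<in> \<Inter>S) xs ys" for f xs ys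
  proof
    fix \<theta> assume "\<theta> \<in> S"
    moreover from this have "list_all2 (\<lambda>x y. (x, y) \<in> \<theta>) xs ys"
      using that(3) by (auto elim: list_all2_mono)
    ultimately show "(op f xs, op f ys) \<in> \<theta>" using assms(2) that(1,2) unfolding con_def by blast
  qed
  ultimately show ?thesis unfolding con_def by blast
qed

subsection \<open>Covers and minimal sets\<close>

lemma covers_con_join_eq:
  assumes cov: "covers A ar op \<beta> \<alpha>" and \<theta>: "con A ar op \<theta>" "\<theta> \<subseteq> \<alpha>" "\<not> \<theta> \<subseteq> \<beta>"
  shows "con_join A ar op \<beta> \<theta> = \<alpha>"
proof -
  let ?S = "{\<eta>. con A ar op \<eta> \<and> \<beta> \<union> \<theta> \<subseteq> \<eta>}"
  have "\<alpha> \<in> ?S" using cov \<theta> unfolding covers_def by auto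
  then have "con A ar op (\<Inter>?S)" "\<beta> \<subset> \<Inter>?S" "\<Inter>?S \<subseteq> \<alpha>"
    using con_Inter[of ?S] \<theta>(3) by blast+
  then show ?thesis using cov unfolding covers_def con_join_def by blast
qed

lemma join_irreducible_eq_if_above_lower_cover:
  assumes "join_irreducible A ar op \<alpha>" "covers A ar op \<beta> \<alpha>"
    and "con A ar op \<theta>" "\<theta> \<subseteq> \<alpha>" "\<not> \<theta> \<subseteq> \<beta>"
  shows "\<theta> = \<alpha>"
  using assms covers_con_join_eq[OF assms(2-5)] unfolding join_irreducible_def covers_def by metis

lemma U_sets_separating_pair:
  assumes alg: "algebra A ar op" and con: "con A ar op \<delta>" "con A ar op \<delta>'"
    and U: "U \<in> U_sets A ar op \<delta> \<delta>'"
  obtains h x y where "h \<in> upol A ar op" "U = h ` A" "(x, y) \<in> \<delta>'" "(h x, h y) \<notin> \<delta>" "h x \<noteq> h y"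
proof -
  obtain h where "h \<in> upol A ar op" "U = h ` A" "\<not> (\<lambda>(x, y). (h x, h y)) ` \<delta>' \<subseteq> \<delta>"
    using U unfolding U_sets_def by blast
  then obtain x y where h: "h \<in> upol A ar op" "U = h ` A" "(x, y) \<in> \<delta>'" "(h x, h y) \<notin> \<delta>"
    by auto
  have "x \<in> A" using h(3) con(2) unfolding con_def equiv_def by blast
  then have "(h x, h x) \<in> \<delta>"
    using upol_closed[OF alg h(1)] con(1) unfolding con_def equiv_def refl_on_def by blast
  then show thesis using that h by fastforce
qed

lemma U_sets_pair_in_diff:
  assumes alg: "algebra A ar op" and con: "con A ar op \<delta>" "con A ar op \<delta>'"
    and U: "{a, b} \<in> U_sets A ar op \<delta> \<delta>'"
  shows "(a, b) \<in> \<delta>' - \<delta>"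
proof -
  obtain h x y where h: "h \<in> upol A ar op" "{a, b} = h ` A" "(x, y) \<in> \<delta>'" "(h x, h y) \<notin> \<delta>" "h x \<noteq> h y"
    using U_sets_separating_pair[OF alg con U] by blast
  have "x \<in> A" "y \<in> A" using h(3) con(2) unfolding con_def equiv_def by auto
  then have "h x \<in> {a, b}" "h y \<in> {a, b}" using h(2) by auto
  then have "{h x, h y} = {a, b}" using h(5) by auto
  moreover have "(h x, h y) \<in> \<delta>'" using con_upol_compatible[OF alg con(2)] h(1,3) by (rule upol_compatibleD)
  moreover have "sym \<delta>" "sym \<delta>'" using con unfolding con_def equiv_def by auto
  ultimately show ?thesis using h(4,5) by (auto simp: doubleton_eq_iff elim: symE)
qed

subsection \<open>The relation \<open>\<le>\<^sub>\<alpha>\<close>\<close>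

definition leq_rel :: "'a set \<Rightarrow> ('f \<Rightarrow> nat) \<Rightarrow> ('f \<Rightarrow> 'a list \<Rightarrow> 'a) \<Rightarrow> 'a \<Rightarrow> 'a \<Rightarrow> 'a rel" where
  "leq_rel A ar op z u = {(a, b). a \<in> A \<and> b \<in> A \<and> leq_al A ar op z u a b}"

lemma leq_al_upol: "g \<in> upol A ar op \<Longrightarrow> leq_al A ar op z u a b \<Longrightarrow> leq_al A ar op z u (g a) (g b)"
  unfolding leq_al_def by (auto intro: upol_comp)

lemma leq_rel_refl: "c \<in> A \<Longrightarrow> (c, c) \<in> leq_rel A ar op z u"
  unfolding leq_rel_def leq_al_def using upol_const[of c A ar op] by auto

lemma leq_rel_upol_compatible: "algebra A ar op \<Longrightarrow> upol_compatible A ar op (leq_rel A ar op z u)"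
  unfolding upol_compatible_def leq_rel_def by (auto intro: upol_closed leq_al_upol)

lemma leq_rel_subset_con:
  assumes "algebra A ar op" "con A ar op \<theta>" "(z, u) \<in> \<theta>"
  shows "leq_rel A ar op z u \<subseteq> \<theta>"
  using upol_compatibleD[OF con_upol_compatible[OF assms(1,2)] _ assms(3)]
  unfolding leq_rel_def leq_al_def by auto

lemma leq_rel_equiv_closure_con:
  assumes alg: "algebra A ar op"
  shows "con A ar op ((leq_rel A ar op z u \<union> (leq_rel A ar op z u)\<inverse>)\<^sup>+)"
proof (rule con_if_upol_compatible[OF alg])
  let ?L = "leq_rel A ar op z u"
  show "equiv A ((?L \<union> ?L\<inverse>)\<^sup>+)"
  proof (rule equivI)
    show "(?L \<union> ?L\<inverse>)\<^sup>+ \<subseteq> A \<times> A" by (rule trancl_subset_Sigma) (auto simp: leq_rel_def)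
    show "refl_on A ((?L \<union> ?L\<inverse>)\<^sup>+)"
      unfolding refl_on_def using leq_rel_refl[of _ A ar op z u] by blast
  qed (auto intro: sym_trancl sym_Un_converse)
  show "upol_compatible A ar op ((?L \<union> ?L\<inverse>)\<^sup>+)"
    by (intro upol_compatible_trancl upol_compatible_Un_converse leq_rel_upol_compatible alg)
qed

lemma join_irreducible_eq_leq_rel_closure:
  assumes alg: "algebra A ar op" and ji: "join_irreducible A ar op \<alpha>"
    and cov: "covers A ar op \<beta> \<alpha>" and zu: "(z, u) \<in> \<alpha> - \<beta>"
  shows "\<alpha> = (leq_rel A ar op z u \<union> (leq_rel A ar op z u)\<inverse>)\<^sup>+"
proof -
  let ?L = "leq_rel A ar op z u"
  have con: "con A ar op \<alpha>" using cov unfolding covers_def by blast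
  then have sym: "sym \<alpha>" and trans: "trans \<alpha>" and "\<alpha> \<subseteq> A \<times> A" unfolding con_def equiv_def by auto
  then have "(z, u) \<in> ?L"
    using zu unfolding leq_rel_def leq_al_def by (auto intro!: bexI[OF _ upol_id])
  then have "\<not> (?L \<union> ?L\<inverse>)\<^sup>+ \<subseteq> \<beta>" using zu by blast
  moreover have "?L \<subseteq> \<alpha>" using leq_rel_subset_con[OF alg con] zu by blast
  then have "?L \<union> ?L\<inverse> \<subseteq> \<alpha>" using sym by (auto elim: symE)
  then have "(?L \<union> ?L\<inverse>)\<^sup>+ \<subseteq> \<alpha>" using trans by (metis trancl_id trancl_mono_subset)
  ultimately show ?thesis
    using join_irreducible_eq_if_above_lower_cover[OF ji cov leq_rel_equiv_closure_con[OF alg]]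
    by metis
qed

lemma trancl_separated_step:
  "(x, y) \<in> R\<^sup>+ \<Longrightarrow> h x \<noteq> h y \<Longrightarrow> \<exists>c d. (c, d) \<in> R \<and> h c \<noteq> h d"
proof (induction rule: trancl_induct)
  case (base y)
  then show ?case by blast
next
  case (step y y')
  show ?case
  proof (cases "h y = h y'")
    case True
    then show ?thesis using step.IH step.prems by simp
  next
    case False
    then show ?thesis using step.hyps(2) by blast
  qed
qed

lemma comp_al_if_separated:
  assumes "(x, y) \<in> (leq_rel A ar op z u \<union> (leq_rel A ar op z u)\<inverse>)\<^sup>+"
    and h: "h \<in> upol A ar op" "h ` A = {a, b}" "h x \<noteq> h y"
  shows "comp_al A ar op z u a b"
proof -
  obtain c d where "(c, d) \<in> leq_rel A ar op z u \<union> (leq_rel A ar op z u)\<inverse>" "h c \<noteq> h d"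
    using trancl_separated_step[OF assms(1) h(3)] by blast
  then obtain c d where cd: "c \<in> A" "d \<in> A" "h c \<noteq> h d" "leq_al A ar op z u c d"
    unfolding leq_rel_def by auto
  then have "h c \<in> {a, b}" "h d \<in> {a, b}" using h(2) by auto
  then have "{h c, h d} = {a, b}" using cd(3) by auto
  moreover have "leq_al A ar op z u (h c) (h d)" using leq_al_upol[OF h(1) cd(4)] .
  ultimately show ?thesis using cd(3) unfolding comp_al_def by (auto simp: doubleton_eq_iff)
qed

lemma trancl_within_class:
  assumes "R \<subseteq> \<theta>" "trans \<theta>" "(x, y) \<in> R\<^sup>+" "x \<in> \<theta> `` {a}"
  shows "(x, y) \<in> {(u, v). u \<in> \<theta> `` {a} \<and> v \<in> \<theta> `` {a} \<and> (u, v) \<in> R}\<^sup>+"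
proof -
  have "y \<in> \<theta> `` {a} \<and> (x, y) \<in> {(u, v). u \<in> \<theta> `` {a} \<and> v \<in> \<theta> `` {a} \<and> (u, v) \<in> R}\<^sup>+"
    using assms(3)
  proof (induction rule: trancl_induct)
    case (base y)
    then show ?case using assms(1,2,4) by (auto elim: transE)
  next
    case (step y y')
    then have "y' \<in> \<theta> `` {a}" using assms(1,2) by (auto elim: transE)
    then show ?case using step by (auto intro: trancl_into_trancl)
  qed
  then show ?thesis ..
qed

lemma comp_al_of_minimal_set:
  assumes alg: "algebra A ar op" and \<alpha>: "\<alpha> = (leq_rel A ar op z u \<union> (leq_rel A ar op z u)\<inverse>)\<^sup>+"
    and cov: "covers A ar op \<delta> \<delta>'" "\<delta>' \<subseteq> \<alpha>" and U: "minimal_set A ar op \<delta> \<delta>' {a, b}"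
  shows "comp_al A ar op z u a b"
proof -
  have "con A ar op \<delta>" "con A ar op \<delta>'" using cov(1) unfolding covers_def by auto
  then obtain h x y where "h \<in> upol A ar op" "{a, b} = h ` A" "(x, y) \<in> \<delta>'" "h x \<noteq> h y"
    using U_sets_separating_pair[OF alg] U unfolding minimal_set_def by metis
  then show ?thesis using comp_al_if_separated[of x y A ar op z u h a b] cov(2) \<alpha> by auto
qed

lemma comp_al_connects_class:
  assumes \<alpha>: "\<alpha> = (leq_rel A ar op z u \<union> (leq_rel A ar op z u)\<inverse>)\<^sup>+"
    and xy: "x \<in> \<alpha> `` {a}" "y \<in> \<alpha> `` {a}"
  shows "(x, y) \<in> {(v, w). v \<in> \<alpha> `` {a} \<and> w \<in> \<alpha> `` {a} \<and> comp_al A ar op z u v w}\<^sup>*"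
proof -
  let ?R = "leq_rel A ar op z u \<union> (leq_rel A ar op z u)\<inverse>"
  let ?S = "{(v, w). v \<in> \<alpha> `` {a} \<and> w \<in> \<alpha> `` {a} \<and> (v, w) \<in> ?R}"
  have sym: "sym \<alpha>" unfolding \<alpha> by (intro sym_trancl sym_Un_converse)
  have trans: "trans \<alpha>" unfolding \<alpha> by (rule trans_trancl)
  have "?R \<subseteq> \<alpha>" unfolding \<alpha> by (intro subrelI r_into_trancl)
  moreover have "(x, y) \<in> \<alpha>" using xy sym trans by (meson Image_singleton_iff symD transD)
  then have "(x, y) \<in> ?R\<^sup>+" using \<alpha> by simp
  ultimately have "(x, y) \<in> ?S\<^sup>+" using trancl_within_class[OF _ trans _ xy(1)] by blast
  then have "(x, y) \<in> (?S - Id)\<^sup>*" unfolding rtrancl_r_diff_Id by (rule trancl_into_rtrancl)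
  moreover have "?S - Id \<subseteq> {(v, w). v \<in> \<alpha> `` {a} \<and> w \<in> \<alpha> `` {a} \<and> comp_al A ar op z u v w}"
    unfolding comp_al_def leq_rel_def by auto
  ultimately show ?thesis using rtrancl_mono by blast
qed

lemma pol_preserves_leq_rel_trancl:
  assumes alg: "algebra A ar op" and p: "p \<in> pol A ar op n"
    and xys: "list_all2 (\<lambda>x y. (x, y) \<in> (leq_rel A ar op z u)\<^sup>+) xs ys" "length xs = n"
  shows "(p xs, p ys) \<in> (leq_rel A ar op z u)\<^sup>+"
proof (rule pol_compatible_if_upol_compatible[OF alg _ _ _ _ p xys])
  show "(leq_rel A ar op z u)\<^sup>+ \<subseteq> A \<times> A" by (rule trancl_subset_Sigma) (auto simp: leq_rel_def)
  show "(c, c) \<in> (leq_rel A ar op z u)\<^sup>+" if "c \<in> A" for c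
    using leq_rel_refl[OF that] by (rule r_into_trancl)
  show "upol_compatible A ar op ((leq_rel A ar op z u)\<^sup>+)"
    by (intro upol_compatible_trancl leq_rel_upol_compatible alg)
qed (rule trans_trancl)

theorem lemma8p2:
  fixes A :: "'a set" and ar :: "'f \<Rightarrow> nat" and op :: "'f \<Rightarrow> 'a list \<Rightarrow> 'a"
    and \<alpha> \<beta> :: "'a rel" and z1 u1 :: 'a
  assumes alg: "algebra A ar op" and fin: "finite A"
    and cm: "cm_variety A ar op"
    and typ4: "typ_sub4 A ar op"
    and ji: "join_irreducible A ar op \<alpha>"
    and low: "covers A ar op \<beta> \<alpha>"
    and U: "minimal_set A ar op \<beta> \<alpha> {z1, u1}" and oi: "z1 \<noteq> u1"
  shows "(\<forall>\<delta> \<delta>' a b. covers A ar op \<delta> \<delta>' \<and> \<delta>' \<subseteq> \<alpha> \<and> minimal_set A ar op \<delta> \<delta>' {a, b}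
            \<longrightarrow> comp_al A ar op z1 u1 a b)
     \<and> (\<forall>a\<in>A. \<forall>x\<in>\<alpha> `` {a}. \<forall>y\<in>\<alpha> `` {a}.
            (x, y) \<in> {(u, v). u \<in> \<alpha> `` {a} \<and> v \<in> \<alpha> `` {a} \<and> comp_al A ar op z1 u1 u v}\<^sup>*)
     \<and> (\<forall>f\<in>upol A ar op. \<forall>a\<in>A. \<forall>b\<in>A. leq_al A ar op z1 u1 a b \<longrightarrow> leq_al A ar op z1 u1 (f a) (f b))
     \<and> (\<forall>n. \<forall>p\<in>pol A ar op n. \<forall>xs\<in>tuples A n. \<forall>ys\<in>tuples A n.
            list_all2 (\<lambda>x y. (x, y) \<in> {(a, b). a \<in> A \<and> b \<in> A \<and> leq_al A ar op z1 u1 a b}\<^sup>+) xs ys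
            \<longrightarrow> (p xs, p ys) \<in> {(a, b). a \<in> A \<and> b \<in> A \<and> leq_al A ar op z1 u1 a b}\<^sup>+)"
proof -
  let ?L = "leq_rel A ar op z1 u1"
  have "con A ar op \<beta>" "con A ar op \<alpha>" using low unfolding covers_def by auto
  then have "(z1, u1) \<in> \<alpha> - \<beta>" using U_sets_pair_in_diff[OF alg] U unfolding minimal_set_def by blast
  then have \<alpha>: "\<alpha> = (?L \<union> ?L\<inverse>)\<^sup>+" by (rule join_irreducible_eq_leq_rel_closure[OF alg ji low])
  have pol: "(p xs, p ys) \<in> ?L\<^sup>+"
    if "p \<in> pol A ar op n" "xs \<in> tuples A n" "list_all2 (\<lambda>x y. (x, y) \<in> ?L\<^sup>+) xs ys" for n p xs ys
    using pol_preserves_leq_rel_trancl[OF alg that(1,3)] that(2) by (simp add: tuples_def)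
  show ?thesis
    unfolding leq_rel_def[symmetric]
  proof (intro conjI allI ballI impI)
    show "comp_al A ar op z1 u1 a b"
      if "covers A ar op \<delta> \<delta>' \<and> \<delta>' \<subseteq> \<alpha> \<and> minimal_set A ar op \<delta> \<delta>' {a, b}" for \<delta> \<delta>' a b
      using comp_al_of_minimal_set[OF alg \<alpha>] that by blast
    show "(x, y) \<in> {(u, v). u \<in> \<alpha> `` {a} \<and> v \<in> \<alpha> `` {a} \<and> comp_al A ar op z1 u1 u v}\<^sup>*"
      if "x \<in> \<alpha> `` {a}" "y \<in> \<alpha> `` {a}" for a x y
      using comp_al_connects_class[OF \<alpha> that] .
  qed (auto intro: leq_al_upol pol)
qed

end
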